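(* Let $\mathcal{X}\subseteq\mathbb{R}^n$ be compact and convex. The following are equivalent: (i) $\mathcal{X}$ is standard comonotone; (ii) for all $v\in\mathbb{R}^n$ and all $i,j\in[n]$ with $v_i=v_j$, there exists $x^*\in\arg\max\{v^\top x: x\in\mathcal{X}\}$ with $x^*_i=x^*_j$; (iii) for all $v\in\mathbb{R}^n$, there exists $x^*\in\arg\max\{v^\top x: x\in\mathcal{X}\}$ such that for all $i,j\in[n]$, $v_i=v_j$ implies $x^*_i=x^*_j$.
   Context: $\Pi_n$ is the set of permutations of $[n]$; for $\pi\in\Pi_n$, $\mathcal{Z}(\pi)=\{x\in\mathbb{R}^n: x_{\pi(1)}\ge\cdots\ge x_{\pi(n)}\}$. A set $\mathcal{X}\subseteq\mathbb{R}^n$ is standard comonotone if for every $\pi\in\Pi_n$ and every $v\in\mathcal{Z}(\pi)$, whenever $\max_{x\in\mathcal{X}}v^\top x$ attains its optimum, it has an optimal solution in $\mathcal{Z}(\pi)$. *)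

theory Defs
  imports "HOL-Analysis.Analysis"
begin

text \<open>Vectors in R^n are modelled as real^'n, with coordinate index type 'n (CARD('n) = n).
A permutation pi of [n] is modelled as a bijection from {..<CARD('n)} (positions 1..n
shifted to 0..n-1) onto the index type; Z(pi) is the set of vectors whose coordinates are
non-increasing along pi.\<close>

definition perm_orderings :: "(nat \<Rightarrow> 'n::finite) set" where
  "perm_orderings = {p. bij_betw p {..<CARD('n)} UNIV}"

definition Zcone :: "(nat \<Rightarrow> 'n::finite) \<Rightarrow> (real^'n) set" where
  "Zcone p = {x. \<forall>k l. k \<le> l \<longrightarrow> l < CARD('n) \<longrightarrow> x $ p l \<le> x $ p k}"

definition argmax_set :: "(real^'n::finite) set \<Rightarrow> real^'n \<Rightarrow> (real^'n) set" where
  "argmax_set X v = {x \<in> X. \<forall>y\<in>X. v \<bullet> y \<le> v \<bullet> x}"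

definition standard_comonotone :: "(real^'n::finite) set \<Rightarrow> bool" where
  "standard_comonotone X \<longleftrightarrow>
     (\<forall>p\<in>perm_orderings. \<forall>v\<in>Zcone p.
        argmax_set X v \<noteq> {} \<longrightarrow> argmax_set X v \<inter> Zcone p \<noteq> {})"

end

(* Condition (ii) rules out inversions: if v_j < v_i, tilt v along e_i - e_j until the two
   coordinates tie; a maximiser y of the tilted objective with y_i = y_j shows that every
   maximiser x for v has x_j <= x_i. Hence a maximiser respecting all ties of v lies in every cone
   Z(pi) containing v, which gives (iii) => (i).
   (i) => (ii): if v_i = v_j, a sorting pi of v stays a sorting after swapping i and j; the two
   maximisers supplied by (i) order coordinates i and j oppositely, and the argmax set is convex.
   (ii) => (iii): if the argmax set missed the subspace of tie-respecting vectors, a functional a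
   orthogonal to that subspace would separate them. Maximisers of v - a/(m+1) order each tie class of v
   reversely to a, a limit of them is a maximiser for v, and on such a vector a is non-positive
   because a sums to zero on every tie class. *)

theory Submission
  imports Defs "HOL-Combinatorics.Transposition"
begin

definition respects_ties :: "real^'n::finite \<Rightarrow> real^'n \<Rightarrow> bool" where
  "respects_ties v x \<longleftrightarrow> (\<forall>i j. v $ i = v $ j \<longrightarrow> x $ i = x $ j)"

definition pairwise_tie_preserving :: "(real^'n::finite) set \<Rightarrow> bool" where
  "pairwise_tie_preserving X \<longleftrightarrow>
     (\<forall>v i j. v $ i = v $ j \<longrightarrow> (\<exists>x\<in>argmax_set X v. x $ i = x $ j))"

definition tie_preserving :: "(real^'n::finite) set \<Rightarrow> bool" where
  "tie_preserving X \<longleftrightarrow> (\<forall>v. \<exists>x\<in>argmax_set X v. respects_ties v x)"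

lemma argmax_set_nonempty:
  fixes X :: "(real^'n::finite) set"
  assumes "compact X" "X \<noteq> {}"
  shows "argmax_set X v \<noteq> {}"
proof -
  have "continuous_on X (\<lambda>x. v \<bullet> x)" by (intro continuous_intros)
  with continuous_attains_sup[OF assms] show ?thesis
    unfolding argmax_set_def by blast
qed

lemma convex_argmax_set:
  fixes X :: "(real^'n::finite) set"
  assumes "convex X"
  shows "convex (argmax_set X v)"
proof -
  have "argmax_set X v = X \<inter> (\<Inter>y\<in>X. {x. v \<bullet> y \<le> v \<bullet> x})"
    unfolding argmax_set_def by auto
  also have "convex \<dots>"
    using assms by (intro convex_Int convex_INT ballI convex_halfspace_ge)
  finally show ?thesis .
qed

lemma compact_argmax_set:
  fixes X :: "(real^'n::finite) set"
  assumes "compact X"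
  shows "compact (argmax_set X v)"
proof -
  have "argmax_set X v = X \<inter> (\<Inter>y\<in>X. {x. v \<bullet> y \<le> v \<bullet> x})"
    unfolding argmax_set_def by auto
  also have "compact \<dots>"
    using assms by (intro compact_Int_closed closed_INT ballI closed_Collect_le continuous_intros)
  finally show ?thesis .
qed

lemma argmax_set_limit_meets_closed:
  fixes X :: "(real^'n::finite) set"
  assumes "compact X" "closed C" "w \<longlonglongrightarrow> v" "\<And>m. argmax_set X (w m) \<inter> C \<noteq> {}"
  shows "argmax_set X v \<inter> C \<noteq> {}"
proof -
  have "\<forall>m. \<exists>z. z \<in> argmax_set X (w m) \<inter> C" using assms(4) by blast
  then obtain f where f: "\<And>m. f m \<in> argmax_set X (w m) \<inter> C" by metis
  then have "\<forall>m. f m \<in> X \<inter> C" unfolding argmax_set_def by auto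
  moreover have "compact (X \<inter> C)" using assms(1,2) by (rule compact_Int_closed)
  ultimately obtain l r where l: "l \<in> X \<inter> C" "strict_mono r" "(f \<circ> r) \<longlonglongrightarrow> l"
    using compact_imp_seq_compact seq_compactE by metis
  have "v \<bullet> y \<le> v \<bullet> l" if "y \<in> X" for y
  proof (rule LIMSEQ_le)
    show "(\<lambda>m. w (r m) \<bullet> y) \<longlonglongrightarrow> v \<bullet> y"
      using LIMSEQ_subseq_LIMSEQ[OF assms(3) l(2)] by (intro tendsto_intros) (simp add: o_def)
    show "(\<lambda>m. w (r m) \<bullet> f (r m)) \<longlonglongrightarrow> v \<bullet> l"
      using LIMSEQ_subseq_LIMSEQ[OF assms(3) l(2)] l(3) by (intro tendsto_intros) (simp_all add: o_def)
    show "\<exists>N. \<forall>m\<ge>N. w (r m) \<bullet> y \<le> w (r m) \<bullet> f (r m)"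
      using f that unfolding argmax_set_def by blast
  qed
  with l(1) show ?thesis unfolding argmax_set_def by blast
qed

lemma convex_coordinate_tie:
  fixes Y :: "(real^'n::finite) set"
  assumes "convex Y" "x \<in> Y" "y \<in> Y" "x $ j \<le> x $ i" "y $ i \<le> y $ j"
  shows "\<exists>z\<in>Y. z $ i = z $ j"
proof -
  have diff: "(axis i 1 - axis j 1) \<bullet> z = z $ i - z $ j" for z :: "real^'n"
    by (simp add: inner_diff_left inner_axis')
  show ?thesis
    using connected_ivt_hyperplane[OF convex_connected[OF assms(1)] assms(3,2), of "axis i 1 - axis j 1" 0]
      assms(4,5)
    unfolding diff by auto
qed

lemma sorting_perm_exists:
  fixes v :: "real^'n::finite"
  shows "\<exists>p\<in>perm_orderings. v \<in> Zcone p"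
proof -
  obtain xs where xs: "distinct xs" "set xs = (UNIV::'n set)"
    using finite_distinct_list[of "UNIV::'n set"] by auto
  define ys where "ys = sort_key (\<lambda>k. - v $ k) xs"
  have ys: "distinct ys" "set ys = UNIV" "length ys = CARD('n)"
    using xs distinct_card[of ys] unfolding ys_def by auto
  have "bij_betw ((!) ys) {..<CARD('n)} UNIV"
    using ys by (intro bij_betw_nth) auto
  moreover have "v \<in> Zcone ((!) ys)"
    unfolding Zcone_def
  proof (intro CollectI allI impI)
    fix k l assume kl: "k \<le> l" "l < CARD('n)"
    have "sorted (map (\<lambda>k. - v $ k) ys)" unfolding ys_def by simp
    from sorted_nth_mono[OF this kl(1)] kl ys(3) show "v $ (ys ! l) \<le> v $ (ys ! k)" by simp
  qed
  ultimately show ?thesis unfolding perm_orderings_def by blast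
qed

lemma transpose_comp_perm_orderings:
  fixes p :: "nat \<Rightarrow> 'n::finite"
  assumes "p \<in> perm_orderings"
  shows "Transposition.transpose i j \<circ> p \<in> perm_orderings"
proof -
  have "bij_betw p {..<CARD('n)} UNIV" using assms unfolding perm_orderings_def by simp
  from bij_betw_trans[OF this bij_transpose] show ?thesis unfolding perm_orderings_def by simp
qed

lemma Zcone_transpose_comp:
  assumes "v $ i = v $ j" "v \<in> Zcone p"
  shows "v \<in> Zcone (Transposition.transpose i j \<circ> p)"
proof -
  have "v $ Transposition.transpose i j c = v $ c" for c
    using assms(1) by (simp add: Transposition.transpose_def)
  with assms(2) show ?thesis unfolding Zcone_def by simp
qed

lemma Zcone_transpose_comp_opposite:
  fixes p :: "nat \<Rightarrow> 'n::finite"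
  assumes "p \<in> perm_orderings" "x \<in> Zcone p" "y \<in> Zcone (Transposition.transpose i j \<circ> p)"
  shows "(x $ j \<le> x $ i \<and> y $ i \<le> y $ j) \<or> (x $ i \<le> x $ j \<and> y $ j \<le> y $ i)"
proof -
  have "p ` {..<CARD('n)} = UNIV"
    using assms(1) unfolding perm_orderings_def by (simp add: bij_betw_imp_surj_on)
  then obtain k l where kl: "k < CARD('n)" "l < CARD('n)" "p k = i" "p l = j"
    by (metis UNIV_I imageE lessThan_iff)
  let ?q = "Transposition.transpose i j \<circ> p"
  have q: "?q k = j" "?q l = i"
    using kl(3,4) by auto
  show ?thesis
  proof (cases "k \<le> l")
    case True
    then have "x $ p l \<le> x $ p k" "y $ ?q l \<le> y $ ?q k"
      using assms(2,3) kl(2) unfolding Zcone_def by blast+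
    then show ?thesis using kl q by simp
  next
    case False
    then have "x $ p k \<le> x $ p l" "y $ ?q k \<le> y $ ?q l"
      using assms(2,3) kl(1) unfolding Zcone_def by auto
    then show ?thesis using kl q by simp
  qed
qed

lemma standard_comonotone_imp_pairwise_tie_preserving:
  fixes X :: "(real^'n::finite) set"
  assumes "compact X" "convex X" "X \<noteq> {}" "standard_comonotone X"
  shows "pairwise_tie_preserving X"
  unfolding pairwise_tie_preserving_def
proof (intro allI impI)
  fix v :: "real^'n" and i j
  assume tie: "v $ i = v $ j"
  obtain p where p: "p \<in> perm_orderings" "v \<in> Zcone p"
    using sorting_perm_exists by blast
  let ?q = "Transposition.transpose i j \<circ> p"
  have q: "?q \<in> perm_orderings" "v \<in> Zcone ?q"
    using p tie by (simp_all add: transpose_comp_perm_orderings Zcone_transpose_comp)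
  have "argmax_set X v \<noteq> {}" using assms(1,3) by (rule argmax_set_nonempty)
  then obtain x y where x: "x \<in> argmax_set X v" "x \<in> Zcone p"
    and y: "y \<in> argmax_set X v" "y \<in> Zcone ?q"
    using assms(4) p q unfolding standard_comonotone_def by blast
  from Zcone_transpose_comp_opposite[OF p(1) x(2) y(2)]
  consider "x $ j \<le> x $ i" "y $ i \<le> y $ j" | "y $ j \<le> y $ i" "x $ i \<le> x $ j"
    by blast
  then show "\<exists>x\<in>argmax_set X v. x $ i = x $ j"
    by cases (use convex_coordinate_tie[OF convex_argmax_set[OF assms(2)]] x(1) y(1) in blast)+
qed

lemma pairwise_tie_preserving_argmax_ordered:
  fixes X :: "(real^'n::finite) set"
  assumes "pairwise_tie_preserving X" "v $ j < v $ i" "x \<in> argmax_set X v"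
  shows "x $ j \<le> x $ i"
proof -
  define s where "s = (v $ i - v $ j) / 2"
  define w where "w = v - s *\<^sub>R (axis i 1 - axis j 1)"
  have s: "s > 0" using assms(2) unfolding s_def by simp
  have v_w: "v \<bullet> z = w \<bullet> z + s * (z $ i - z $ j)" for z
    unfolding w_def by (simp add: inner_diff_left inner_axis' algebra_simps)
  have "w $ i = w $ j"
    using assms(2) unfolding w_def s_def by (auto simp: axis_def field_simps)
  then obtain y where y: "y \<in> argmax_set X w" "y $ i = y $ j"
    using assms(1) unfolding pairwise_tie_preserving_def by blast
  have "w \<bullet> x \<le> w \<bullet> y" "v \<bullet> y \<le> v \<bullet> x"
    using assms(3) y(1) unfolding argmax_set_def by auto
  moreover have "s * (y $ i - y $ j) = 0" using y(2) by simp
  ultimately have "0 \<le> s * (x $ i - x $ j)"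
    using v_w[of x] v_w[of y] by linarith
  with s show ?thesis by (simp add: zero_le_mult_iff)
qed

lemma tie_preserving_imp_pairwise_tie_preserving:
  fixes X :: "(real^'n::finite) set"
  assumes "tie_preserving X"
  shows "pairwise_tie_preserving X"
  unfolding pairwise_tie_preserving_def
proof (intro allI impI)
  fix v :: "real^'n" and i j
  assume "v $ i = v $ j"
  moreover obtain x where "x \<in> argmax_set X v" "respects_ties v x"
    using assms unfolding tie_preserving_def by blast
  ultimately show "\<exists>x\<in>argmax_set X v. x $ i = x $ j"
    unfolding respects_ties_def by blast
qed

lemma tie_preserving_imp_standard_comonotone:
  fixes X :: "(real^'n::finite) set"
  assumes "tie_preserving X"
  shows "standard_comonotone X"
  unfolding standard_comonotone_def
proof (intro ballI impI)
  fix p :: "nat \<Rightarrow> 'n" and v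
  assume "v \<in> Zcone p"
  obtain x where x: "x \<in> argmax_set X v" "respects_ties v x"
    using assms unfolding tie_preserving_def by blast
  have pairwise: "pairwise_tie_preserving X"
    using assms by (rule tie_preserving_imp_pairwise_tie_preserving)
  have "x $ p l \<le> x $ p k" if "k \<le> l" "l < CARD('n)" for k l
  proof (cases "v $ p l = v $ p k")
    case True
    with x(2) show ?thesis unfolding respects_ties_def by (metis order_refl)
  next
    case False
    moreover have "v $ p l \<le> v $ p k"
      using \<open>v \<in> Zcone p\<close> that unfolding Zcone_def by blast
    ultimately have "v $ p l < v $ p k" by simp
    then show ?thesis by (rule pairwise_tie_preserving_argmax_ordered[OF pairwise _ x(1)])
  qed
  then have "x \<in> Zcone p" unfolding Zcone_def by blast
  with x(1) show "argmax_set X v \<inter> Zcone p \<noteq> {}" by blast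
qed

lemma subspace_respects_ties:
  fixes v :: "real^'n::finite"
  shows "subspace {x. respects_ties v x}"
  unfolding subspace_def respects_ties_def
proof (intro conjI ballI allI impI CollectI)
  fix c :: real and x y :: "real^'n" and i j
  assume "x \<in> {x. \<forall>i j. v $ i = v $ j \<longrightarrow> x $ i = x $ j}"
    "y \<in> {x. \<forall>i j. v $ i = v $ j \<longrightarrow> x $ i = x $ j}" "v $ i = v $ j"
  then have "x $ i = x $ j" "y $ i = y $ j" by blast+
  then show "(x + y) $ i = (x + y) $ j" "(c *\<^sub>R x) $ i = (c *\<^sub>R x) $ j" by simp_all
qed simp

lemma separating_hyperplane_subspace_compact:
  fixes S :: "'a::euclidean_space set"
  assumes "subspace S" "convex Y" "compact Y" "Y \<noteq> {}" "S \<inter> Y = {}"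
  shows "\<exists>a. (\<forall>s\<in>S. a \<bullet> s = 0) \<and> (\<forall>y\<in>Y. 0 < a \<bullet> y)"
proof -
  obtain a b where a: "\<forall>s\<in>S. a \<bullet> s < b" and b: "\<forall>y\<in>Y. b < a \<bullet> y"
    using separating_hyperplane_closed_compact[OF subspace_imp_convex closed_subspace assms(2-5)]
      assms(1) by blast
  have "a \<bullet> s = 0" if "s \<in> S" for s
  proof (rule ccontr)
    assume "a \<bullet> s \<noteq> 0"
    then have "a \<bullet> ((b / (a \<bullet> s)) *\<^sub>R s) = b" by simp
    moreover have "(b / (a \<bullet> s)) *\<^sub>R s \<in> S" using assms(1) that by (rule subspace_scale)
    ultimately show False using a by fastforce
  qed
  moreover have "0 < b" using a subspace_0[OF assms(1)] by force
  ultimately show ?thesis using b by force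
qed

text \<open>The witness s is constant on each tie class of v, hence orthogonal to a; on every
  coordinate it lies above z where a is positive and below z where a is negative.\<close>

lemma inner_nonpos_if_reversed_on_ties:
  fixes a z v :: "real^'n::finite"
  assumes orth: "\<And>s. respects_ties v s \<Longrightarrow> a \<bullet> s = 0"
    and reversed: "\<And>k l. v $ k = v $ l \<Longrightarrow> a $ k < a $ l \<Longrightarrow> z $ l \<le> z $ k"
  shows "a \<bullet> z \<le> 0"
proof -
  define T where "T k = insert (Min ((\<lambda>l. z $ l) ` {l. v $ l = v $ k}))
    ((\<lambda>l. z $ l) ` {l. v $ l = v $ k \<and> 0 < a $ l})" for k
  define s :: "real^'n" where "s = (\<chi> k. Max (T k))"
  have "respects_ties v s" unfolding respects_ties_def s_def T_def by simp
  then have "a \<bullet> z = (\<Sum>k\<in>UNIV. a $ k * (z $ k - s $ k))"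
    using orth by (simp add: inner_vec_def sum_subtractf right_diff_distrib)
  also have "\<dots> \<le> 0"
  proof (intro sum_nonpos)
    fix k
    have T: "finite (T k)" "T k \<noteq> {}" unfolding T_def by auto
    consider "0 < a $ k" | "a $ k < 0" | "a $ k = 0" by linarith
    then show "a $ k * (z $ k - s $ k) \<le> 0"
    proof cases
      case 1
      then have "z $ k \<in> T k" unfolding T_def by blast
      with T have "z $ k \<le> s $ k" unfolding s_def by simp
      with 1 show ?thesis by (simp add: mult_nonneg_nonpos)
    next
      case 2
      have "t \<le> z $ k" if "t \<in> T k" for t
        using that reversed[of k] 2 unfolding T_def by (auto intro: Min_le)
      with T have "s $ k \<le> z $ k" unfolding s_def by simp
      with 2 show ?thesis by (simp add: mult_nonpos_nonneg)
    qed simp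
  qed
  finally show ?thesis .
qed

lemma pairwise_tie_preserving_imp_tie_preserving:
  fixes X :: "(real^'n::finite) set"
  assumes "compact X" "convex X" "X \<noteq> {}" "pairwise_tie_preserving X"
  shows "tie_preserving X"
  unfolding tie_preserving_def
proof (rule allI, rule ccontr)
  fix v :: "real^'n"
  assume "\<not> (\<exists>x\<in>argmax_set X v. respects_ties v x)"
  then have "{x. respects_ties v x} \<inter> argmax_set X v = {}" by blast
  then obtain a where orth: "\<And>s. respects_ties v s \<Longrightarrow> a \<bullet> s = 0"
    and pos: "\<And>y. y \<in> argmax_set X v \<Longrightarrow> 0 < a \<bullet> y"
    using separating_hyperplane_subspace_compact[OF subspace_respects_ties
        convex_argmax_set[OF assms(2)] compact_argmax_set[OF assms(1)]
        argmax_set_nonempty[OF assms(1,3)]]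
    by blast
  define C :: "(real^'n) set"
    where "C = (\<Inter>(k, l)\<in>{(k, l). v $ k = v $ l \<and> a $ k < a $ l}. {z. z $ l \<le> z $ k})"
  define w where "w m = v - inverse (real (Suc m)) *\<^sub>R a" for m
  have "closed C"
    unfolding C_def by (intro closed_INT ballI) (auto intro!: closed_Collect_le continuous_intros)
  have "w \<longlonglongrightarrow> v"
    using tendsto_diff[OF tendsto_const tendsto_scaleR[OF LIMSEQ_inverse_real_of_nat tendsto_const]]
    unfolding w_def by simp
  have "argmax_set X (w m) \<inter> C \<noteq> {}" for m
  proof -
    obtain z where z: "z \<in> argmax_set X (w m)"
      using argmax_set_nonempty[OF assms(1,3)] by blast
    have "z $ l \<le> z $ k" if "v $ k = v $ l" "a $ k < a $ l" for k l
    proof (rule pairwise_tie_preserving_argmax_ordered[OF assms(4) _ z])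
      show "w m $ l < w m $ k" unfolding w_def using that by simp
    qed
    with z show ?thesis unfolding C_def by blast
  qed
  with argmax_set_limit_meets_closed[OF assms(1) \<open>closed C\<close> \<open>w \<longlonglongrightarrow> v\<close>]
  obtain z where "z \<in> argmax_set X v" "z \<in> C" by blast
  then have "0 < a \<bullet> z" "a \<bullet> z \<le> 0"
    using pos inner_nonpos_if_reversed_on_ties[OF orth] unfolding C_def by auto
  then show False by simp
qed

theorem theorem3:
  fixes X :: "(real^'n::finite) set"
  assumes "compact X" and "convex X" and "X \<noteq> {}"
  shows "(standard_comonotone X \<longleftrightarrow>
           (\<forall>v i j. v $ i = v $ j \<longrightarrow> (\<exists>x\<in>argmax_set X v. x $ i = x $ j)))
       \<and> (standard_comonotone X \<longleftrightarrow>
           (\<forall>v. \<exists>x\<in>argmax_set X v. \<forall>i j. v $ i = v $ j \<longrightarrow> x $ i = x $ j))"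
proof -
  have "standard_comonotone X \<Longrightarrow> pairwise_tie_preserving X"
    using assms by (rule standard_comonotone_imp_pairwise_tie_preserving)
  moreover have "pairwise_tie_preserving X \<Longrightarrow> tie_preserving X"
    using assms by (rule pairwise_tie_preserving_imp_tie_preserving)
  moreover have "tie_preserving X \<Longrightarrow> standard_comonotone X"
    by (rule tie_preserving_imp_standard_comonotone)
  moreover have "tie_preserving X \<Longrightarrow> pairwise_tie_preserving X"
    by (rule tie_preserving_imp_pairwise_tie_preserving)
  ultimately have "(standard_comonotone X \<longleftrightarrow> pairwise_tie_preserving X)
      \<and> (standard_comonotone X \<longleftrightarrow> tie_preserving X)"
    by blast
  then show ?thesis
    unfolding pairwise_tie_preserving_def tie_preserving_def respects_ties_def .
qed

end
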